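(* Let $Q_x$ be a full-dimensional rational polytope in $\mathbb{R}^m$, $m\ge2$; let $H^1\subseteq\mathbb{R}^m$ be a hyperplane with $Q_x^1:=H^1\cap Q_x\neq\emptyset$; let $H\neq H^1$ be a hyperplane supporting a nonempty face of $Q_x^1$, and let $\bar H$ be the closed half-space bounded by $H$ not containing $Q_x^1$. Then for every point $\bar x$ in the relative interior of $\bar H\cap H^1$, $$d(\bar x,Q_x)\ge d(\bar x,H\cap H^1)\cdot\sin\theta(Q_x,H^1,\bar H).$$
   Context: Such a $(Q_x,H^1,\bar H)$ is called a triplet. $\theta(Q_x,H^1,\bar H)$ denotes the maximum, over all hyperplanes $H^*\subseteq\mathbb{R}^m$ with $H^*\cap H^1=H\cap H^1$ that separate $\mathrm{int}(Q_x)$ from $\bar H\cap H^1$, of the angle (in $[0,\pi/2]$) between $H^1$ and $H^*$; such hyperplanes exist and the maximum is attained. $d$ denotes Euclidean distance, with $d(x,S)=\inf_{y\in S}d(x,y)$. *)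

theory Defs
  imports "HOL-Analysis.Analysis"
begin

definition rational_polytope :: "(real^'m) set \<Rightarrow> bool" where
  "rational_polytope Q \<longleftrightarrow>
     (\<exists>V. finite V \<and> (\<forall>v\<in>V. \<forall>i. v $ i \<in> \<rat>) \<and> Q = convex hull V)"

definition hyperplane_angle :: "'a::real_inner \<Rightarrow> 'a \<Rightarrow> real" where
  "hyperplane_angle a c = arccos (\<bar>a \<bullet> c\<bar> / (norm a * norm c))"

definition separates_hp :: "'a::real_inner set \<Rightarrow> 'a set \<Rightarrow> 'a \<Rightarrow> real \<Rightarrow> bool" where
  "separates_hp S T c d \<longleftrightarrow> c \<noteq> 0 \<and>
     (((\<forall>x\<in>S. c \<bullet> x \<le> d) \<and> (\<forall>x\<in>T. c \<bullet> x \<ge> d)) \<or>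
      ((\<forall>x\<in>S. c \<bullet> x \<ge> d) \<and> (\<forall>x\<in>T. c \<bullet> x \<le> d)))"

definition theta :: "'a::euclidean_space set \<Rightarrow> 'a set \<Rightarrow> 'a set \<Rightarrow> real" where
  "theta Q H1 Hbar = Sup {hyperplane_angle a c | a b c d.
      a \<noteq> 0 \<and> H1 = {x. a \<bullet> x = b} \<and> c \<noteq> 0 \<and>
      {x. c \<bullet> x = d} \<inter> H1 = frontier Hbar \<inter> H1 \<and>
      separates_hp (interior Q) (Hbar \<inter> H1) c d}"

end

theory Submission
  imports Defs
begin

text \<open>Any admissible hyperplane \<open>H* = {c \<bullet> x = d}\<close> puts \<open>Q\<close> on one side and \<open>x\<close> on the other,
  so \<open>d(x, Q) \<ge> d(x, H*)\<close>. Inside \<open>H\<^sup>1\<close>, the point of \<open>H* \<inter> H\<^sup>1 = H \<inter> H\<^sup>1\<close> reached from \<open>x\<close>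
  along the projection of \<open>c\<close> onto \<open>H\<^sup>1\<close> has distance \<open>d(x, H*) / sin \<angle>(H\<^sup>1, H*)\<close>; this gives the
  bound for every admissible angle, hence for their supremum by continuity of \<open>sin\<close>. At least
  one admissible hyperplane exists: since \<open>H\<close> supports \<open>Q \<inter> H\<^sup>1\<close>, some member \<open>H + \<mu> H\<^sup>1\<close> of the
  pencil through \<open>H \<inter> H\<^sup>1\<close> supports \<open>Q\<close> itself (a one-dimensional Farkas argument on the
  vertices of \<open>Q\<close>).\<close>

definition admissible_angles :: "'a::euclidean_space set \<Rightarrow> 'a set \<Rightarrow> 'a set \<Rightarrow> real set" where
  "admissible_angles Q H1 Hbar = {hyperplane_angle a c | a b c d.
      a \<noteq> 0 \<and> H1 = {x. a \<bullet> x = b} \<and> c \<noteq> 0 \<and>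
      {x. c \<bullet> x = d} \<inter> H1 = frontier Hbar \<inter> H1 \<and>
      separates_hp (interior Q) (Hbar \<inter> H1) c d}"

lemma theta_eq_Sup_admissible_angles: "theta Q H1 Hbar = Sup (admissible_angles Q H1 Hbar)"
  by (simp add: theta_def admissible_angles_def)

lemma hyperplane_angle_le_pi2: "hyperplane_angle a c \<le> pi / 2"
  unfolding hyperplane_angle_def
  by (rule arccos_le_pi2) (use Cauchy_Schwarz_ineq2[of a c] in \<open>auto simp: divide_le_eq\<close>)

lemma hyperplane_angle_uminus_right [simp]: "hyperplane_angle a (- c) = hyperplane_angle a c"
  by (simp add: hyperplane_angle_def)

lemma sin_hyperplane_angle:
  fixes a c :: "'a::real_inner"
  assumes "a \<noteq> 0" "c \<noteq> 0"
  shows "sin (hyperplane_angle a c) = norm (c - ((c \<bullet> a) / (a \<bullet> a)) *\<^sub>R a) / norm c"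
proof -
  define w where "w = c - ((c \<bullet> a) / (a \<bullet> a)) *\<^sub>R a"
  define r where "r = \<bar>a \<bullet> c\<bar> / (norm a * norm c)"
  have na: "norm a > 0" and nc: "norm c > 0" using assms by auto
  have r: "\<bar>r\<bar> \<le> 1"
    unfolding r_def using Cauchy_Schwarz_ineq2[of a c] na nc by (auto simp: field_simps)
  have ww: "w \<bullet> w = c \<bullet> c - (c \<bullet> a)\<^sup>2 / (a \<bullet> a)"
    unfolding w_def using assms by (simp add: algebra_simps inner_commute power2_eq_square field_simps)
  have "1 - r\<^sup>2 = (w \<bullet> w) / (c \<bullet> c)"
    unfolding ww r_def using na nc
    by (simp add: power_divide power_mult_distrib power2_norm_eq_inner[symmetric] field_simps inner_commute)
  hence "sqrt (1 - r\<^sup>2) = norm w / norm c"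
    by (simp add: real_sqrt_divide norm_eq_sqrt_inner)
  thus ?thesis unfolding hyperplane_angle_def r_def[symmetric] w_def[symmetric]
    using r by (simp add: sin_arccos_abs)
qed

lemma halfspace_gap_le_infdist:
  fixes c x :: "'a::real_inner"
  assumes "Q \<noteq> {}" "\<forall>y\<in>Q. c \<bullet> y \<le> d"
  shows "(c \<bullet> x - d) / norm c \<le> infdist x Q"
  unfolding infdist_notempty[OF assms(1)]
proof (rule cINF_greatest[OF assms(1)])
  fix y assume y: "y \<in> Q"
  have "c \<bullet> x - d \<le> c \<bullet> (x - y)" using assms(2) y by (simp add: inner_diff_right)
  also have "\<dots> \<le> norm c * dist x y"
    using norm_cauchy_schwarz[of c "x - y"] by (simp add: dist_norm)
  finally show "(c \<bullet> x - d) / norm c \<le> dist x y"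
    by (cases "c = 0") (auto simp: field_simps)
qed

text \<open>Move from \<open>x\<close> along \<open>w\<close>, the component of \<open>c\<close> orthogonal to \<open>a\<close>: this keeps \<open>a \<bullet> x\<close> fixed
  and changes \<open>c \<bullet> x\<close> at rate \<open>\<parallel>w\<parallel>\<^sup>2\<close>.\<close>
lemma infdist_hyperplane_inter_le:
  fixes a c x :: "'a::real_inner"
  defines "w \<equiv> c - ((c \<bullet> a) / (a \<bullet> a)) *\<^sub>R a"
  assumes "a \<noteq> 0" "w \<noteq> 0" "a \<bullet> x = b" "d \<le> c \<bullet> x"
  shows "infdist x ({y. c \<bullet> y = d} \<inter> {y. a \<bullet> y = b}) \<le> (c \<bullet> x - d) / norm w"
proof -
  have wa: "w \<bullet> a = 0" unfolding w_def using assms(2) by (simp add: inner_diff_left)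
  have cw: "c \<bullet> w = w \<bullet> w"
    unfolding w_def using wa[unfolded w_def] by (simp add: inner_diff_right inner_diff_left inner_commute)
  have ww: "w \<bullet> w = (norm w)\<^sup>2" by (simp add: power2_norm_eq_inner)
  define p where "p = x - ((c \<bullet> x - d) / (w \<bullet> w)) *\<^sub>R w"
  have "p \<in> {y. c \<bullet> y = d} \<inter> {y. a \<bullet> y = b}"
    unfolding p_def using assms(3,4) wa cw by (simp add: inner_diff_right inner_commute)
  moreover have "dist x p = (c \<bullet> x - d) / norm w"
    unfolding p_def dist_norm ww using assms(3,5) by (simp add: power2_eq_square)
  ultimately show ?thesis by (metis infdist_le)
qed

lemma infdist_mult_sin_hyperplane_angle_le:
  fixes a c x :: "'a::real_inner"
  assumes "a \<noteq> 0" "c \<noteq> 0" "Q \<noteq> {}" "\<forall>y\<in>Q. c \<bullet> y \<le> d"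
    and "a \<bullet> x = b" "d \<le> c \<bullet> x"
  shows "infdist x ({y. c \<bullet> y = d} \<inter> {y. a \<bullet> y = b}) * sin (hyperplane_angle a c) \<le> infdist x Q"
proof -
  define w where "w = c - ((c \<bullet> a) / (a \<bullet> a)) *\<^sub>R a"
  have sin: "sin (hyperplane_angle a c) = norm w / norm c"
    using sin_hyperplane_angle[OF assms(1,2)] by (simp add: w_def)
  show ?thesis
  proof (cases "w = 0")
    case True
    thus ?thesis by (simp add: sin infdist_nonneg)
  next
    case False
    have "infdist x ({y. c \<bullet> y = d} \<inter> {y. a \<bullet> y = b}) * (norm w / norm c)
        \<le> (c \<bullet> x - d) / norm w * (norm w / norm c)"
      using infdist_hyperplane_inter_le[OF assms(1) _ assms(5,6)] False
      by (intro mult_right_mono) (auto simp: w_def)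
    also have "\<dots> = (c \<bullet> x - d) / norm c" using False by simp
    also have "\<dots> \<le> infdist x Q" using halfspace_gap_le_infdist[OF assms(3,4)] .
    finally show ?thesis by (simp add: sin)
  qed
qed

lemma halfspace_le_of_interior:
  fixes Q :: "'a::euclidean_space set"
  assumes "convex Q" "interior Q \<noteq> {}" "\<forall>y\<in>interior Q. c \<bullet> y \<le> d"
  shows "\<forall>y\<in>Q. c \<bullet> y \<le> d"
proof -
  have "closure (interior Q) \<subseteq> {y. c \<bullet> y \<le> d}"
    using assms(3) by (intro closure_minimal) (auto simp: closed_halfspace_le)
  thus ?thesis
    using convex_closure_interior[OF assms(1,2)] closure_subset[of Q] by auto
qed

lemma admissible_angle_bound:
  fixes Q :: "'a::euclidean_space set"
  assumes "\<phi> \<in> admissible_angles Q H1 Hbar"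
    and "convex Q" "interior Q \<noteq> {}" "x \<in> Hbar \<inter> H1"
  shows "infdist x (frontier Hbar \<inter> H1) * sin \<phi> \<le> infdist x Q"
proof -
  obtain a b c d where \<phi>: "\<phi> = hyperplane_angle a c" and a: "a \<noteq> 0"
    and H1: "H1 = {y. a \<bullet> y = b}" and c: "c \<noteq> 0"
    and L: "frontier Hbar \<inter> H1 = {y. c \<bullet> y = d} \<inter> {y. a \<bullet> y = b}"
    and sep: "separates_hp (interior Q) (Hbar \<inter> H1) c d"
    using assms(1) unfolding admissible_angles_def by fastforce
  have Qne: "Q \<noteq> {}" using assms(3) interior_subset by blast
  have xa: "a \<bullet> x = b" using assms(4) H1 by auto
  from sep consider
      "\<forall>y\<in>interior Q. c \<bullet> y \<le> d" "d \<le> c \<bullet> x"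
    | "\<forall>y\<in>interior Q. (- c) \<bullet> y \<le> - d" "- d \<le> (- c) \<bullet> x"
    unfolding separates_hp_def using assms(4) by fastforce
  thus ?thesis
  proof cases
    case 1
    thus ?thesis unfolding \<phi> L
      using infdist_mult_sin_hyperplane_angle_le[OF a c Qne _ xa]
        halfspace_le_of_interior[OF assms(2,3)] by blast
  next
    case 2
    have "- c \<noteq> 0" using c by simp
    have "{y. (- c) \<bullet> y = - d} = {y. c \<bullet> y = d}" by auto
    moreover have "infdist x ({y. (- c) \<bullet> y = - d} \<inter> {y. a \<bullet> y = b}) * sin (hyperplane_angle a (- c))
        \<le> infdist x Q"
      using infdist_mult_sin_hyperplane_angle_le[OF a \<open>- c \<noteq> 0\<close> Qne _ xa] 2
        halfspace_le_of_interior[OF assms(2,3)] by blast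
    ultimately show ?thesis unfolding \<phi> L by simp
  qed
qed

subsection \<open>An admissible hyperplane from the pencil through \<open>H \<inter> H\<^sup>1\<close>\<close>

text \<open>For vertices \<open>u, w\<close> on opposite sides of \<open>H\<^sup>1\<close>, the point of \<open>[u, w] \<inter> H\<^sup>1\<close> lies below \<open>H\<close>.\<close>
lemma pencil_pair_inequality:
  fixes V :: "'a::real_inner set"
  assumes supp: "\<forall>x\<in>{x. a1 \<bullet> x = b1} \<inter> convex hull V. a \<bullet> x \<le> b"
    and "u \<in> V" "w \<in> V" "a1 \<bullet> u < b1" "b1 < a1 \<bullet> w"
  shows "(a1 \<bullet> w - b1) * (a \<bullet> u - b) \<le> (a1 \<bullet> u - b1) * (a \<bullet> w - b)"
proof -
  define gu gw where "gu = a1 \<bullet> u - b1" and "gw = a1 \<bullet> w - b1"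
  define k where "k = gw - gu"
  have k: "k > 0" using assms(4,5) by (simp add: k_def gu_def gw_def)
  define p where "p = (gw / k) *\<^sub>R u + (- gu / k) *\<^sub>R w"
  have "gw = gu + k" by (simp add: k_def)
  have affine: "e \<bullet> p - t = (gw * (e \<bullet> u - t) - gu * (e \<bullet> w - t)) / k" for e t
    unfolding p_def using k \<open>gw = gu + k\<close> by (simp add: inner_add_right inner_diff_right field_simps)
  have "gw / k + - gu / k = 1" using k \<open>gw = gu + k\<close> by (simp add: field_simps)
  hence "p \<in> convex hull V"
    unfolding p_def using assms(2-5) k
    by (intro convexD[OF convex_convex_hull]) (auto simp: hull_inc gu_def gw_def)
  moreover have "a1 \<bullet> p = b1" using affine[of a1 b1] by (simp add: gu_def gw_def)
  ultimately have "a \<bullet> p - b \<le> 0" using supp by auto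
  thus ?thesis using affine[of a b] k by (simp add: divide_le_0_iff gu_def gw_def)
qed

lemma pencil_supports_convex_hull:
  fixes V :: "'a::real_inner set"
  assumes fin: "finite V"
    and supp: "\<forall>x\<in>{x. a1 \<bullet> x = b1} \<inter> convex hull V. a \<bullet> x \<le> b"
  shows "\<exists>\<mu>. \<forall>x\<in>convex hull V. (a + \<mu> *\<^sub>R a1) \<bullet> x \<le> b + \<mu> * b1"
proof -
  define f g where "f v = a \<bullet> v - b" and "g v = a1 \<bullet> v - b1" for v
  define Lo where "Lo = (\<lambda>v. - f v / g v) ` {v\<in>V. g v < 0}"
  define Up where "Up = (\<lambda>v. - f v / g v) ` {v\<in>V. g v > 0}"
  have fin_Lo: "finite Lo" and fin_Up: "finite Up" using fin unfolding Lo_def Up_def by auto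
  have Lo_le_Up: "l \<le> r" if lr: "l \<in> Lo" "r \<in> Up" for l r
  proof -
    obtain u w where u: "u \<in> V" "g u < 0" "l = - f u / g u" and w: "w \<in> V" "g w > 0" "r = - f w / g w"
      using lr unfolding Lo_def Up_def by fast
    have "(l - r) * (g u * g w) = (l * g u) * g w - (r * g w) * g u" by (simp add: algebra_simps)
    also have "\<dots> = f w * g u - f u * g w" using u w by simp
    also have "\<dots> \<ge> 0"
      using pencil_pair_inequality[OF supp u(1) w(1)] u(2) w(2) by (simp add: f_def g_def mult.commute)
    finally have "(l - r) * (g u * g w) \<ge> 0" .
    moreover have "g u * g w < 0" using u w by (simp add: mult_neg_pos)
    ultimately show ?thesis using mult_pos_neg[of "l - r" "g u * g w"] by linarith
  qed
  text \<open>Any \<open>\<mu>\<close> between \<open>Max Lo\<close> and \<open>Min Up\<close> works; empty bounds are replaced by the other one or 0.\<close>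
  define \<mu> where "\<mu> = (if Lo = {} then (if Up = {} then 0 else Min Up) else Max Lo)"
  have \<mu>_Lo: "l \<le> \<mu>" if "l \<in> Lo" for l
    using that fin_Lo by (auto simp: \<mu>_def)
  have \<mu>_Up: "\<mu> \<le> r" if "r \<in> Up" for r
    using that fin_Lo fin_Up Lo_le_Up Max_in[OF fin_Lo] by (auto simp: \<mu>_def)
  have "f v + \<mu> * g v \<le> 0" if v: "v \<in> V" for v
  proof (cases "g v" "0::real" rule: linorder_cases)
    case less
    hence "- f v / g v \<le> \<mu>" using \<mu>_Lo v by (auto simp: Lo_def)
    thus ?thesis using less by (simp add: divide_simps)
  next
    case equal
    thus ?thesis using supp v by (auto simp: f_def g_def hull_inc)
  next
    case greater
    hence "\<mu> \<le> - f v / g v" using \<mu>_Up v by (auto simp: Up_def)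
    thus ?thesis using greater by (simp add: divide_simps)
  qed
  hence "V \<subseteq> {x. (a + \<mu> *\<^sub>R a1) \<bullet> x \<le> b + \<mu> * b1}"
    by (auto simp: f_def g_def inner_add_left algebra_simps)
  hence "convex hull V \<subseteq> {x. (a + \<mu> *\<^sub>R a1) \<bullet> x \<le> b + \<mu> * b1}"
    by (intro hull_minimal) (auto simp: convex_halfspace_le)
  thus ?thesis by blast
qed

lemma pencil_angle_admissible:
  fixes Q :: "'a::euclidean_space set"
  assumes "a1 \<noteq> 0" "a \<noteq> 0"
    and "{x. a \<bullet> x = b} \<noteq> {x. a1 \<bullet> x = b1}" "{x. a \<bullet> x = b} \<inter> {x. a1 \<bullet> x = b1} \<noteq> {}"
    and Q: "\<forall>x\<in>Q. (a + \<mu> *\<^sub>R a1) \<bullet> x \<le> b + \<mu> * b1"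
  shows "hyperplane_angle a1 (a + \<mu> *\<^sub>R a1) \<in> admissible_angles Q {x. a1 \<bullet> x = b1} {x. b \<le> a \<bullet> x}"
proof -
  define c d where "c = a + \<mu> *\<^sub>R a1" and "d = b + \<mu> * b1"
  have on_H1: "c \<bullet> x - d = a \<bullet> x - b" if "a1 \<bullet> x = b1" for x
    using that by (simp add: c_def d_def inner_add_left algebra_simps)
  have "c \<noteq> 0"
  proof
    assume "c = 0"
    hence a: "a = - \<mu> *\<^sub>R a1" by (simp add: c_def eq_neg_iff_add_eq_0)
    with assms(4) have "b = - \<mu> * b1" by auto
    with a assms(2,3) show False by auto
  qed
  moreover have "{x. c \<bullet> x = d} \<inter> {x. a1 \<bullet> x = b1} = frontier {x. b \<le> a \<bullet> x} \<inter> {x. a1 \<bullet> x = b1}"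
    using on_H1 assms(2) by (fastforce simp: frontier_halfspace_ge)
  moreover have "separates_hp (interior Q) ({x. b \<le> a \<bullet> x} \<inter> {x. a1 \<bullet> x = b1}) c d"
    unfolding separates_hp_def using \<open>c \<noteq> 0\<close> Q interior_subset[of Q] on_H1
    by (fastforce simp: c_def d_def)
  ultimately show ?thesis
    unfolding admissible_angles_def c_def d_def using assms(1) by blast
qed

theorem lemma3:
  fixes Q :: "(real^'m) set" and a1 a xbar :: "real^'m" and b1 b :: real
  assumes m2: "CARD('m) \<ge> 2"
    and poly: "rational_polytope Q"
    and fulldim: "aff_dim Q = int CARD('m)"
    and H1: "a1 \<noteq> 0"
    and Q1ne: "{x. a1 \<bullet> x = b1} \<inter> Q \<noteq> {}"
    and H: "a \<noteq> 0"
    and HneH1: "{x. a \<bullet> x = b} \<noteq> {x. a1 \<bullet> x = b1}"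
    and supp: "\<forall>x\<in>{x. a1 \<bullet> x = b1} \<inter> Q. a \<bullet> x \<le> b"
    and face_ne: "{x. a \<bullet> x = b} \<inter> ({x. a1 \<bullet> x = b1} \<inter> Q) \<noteq> {}"
    and Hbar_not: "\<not> ({x. a1 \<bullet> x = b1} \<inter> Q \<subseteq> {x. a \<bullet> x \<ge> b})"
    and xbar: "xbar \<in> rel_interior ({x. a \<bullet> x \<ge> b} \<inter> {x. a1 \<bullet> x = b1})"
  shows "infdist xbar Q \<ge>
           infdist xbar ({x. a \<bullet> x = b} \<inter> {x. a1 \<bullet> x = b1})
           * sin (theta Q {x. a1 \<bullet> x = b1} {x. a \<bullet> x \<ge> b})"
proof -
  define S where "S = admissible_angles Q {x. a1 \<bullet> x = b1} {x. a \<bullet> x \<ge> b}"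
  obtain V where "finite V" and QV: "Q = convex hull V"
    using poly unfolding rational_polytope_def by auto
  have "convex Q" using QV by simp
  have "affine hull Q = UNIV" using fulldim aff_dim_eq_full[of Q] by simp
  hence "interior Q \<noteq> {}"
    using Q1ne \<open>convex Q\<close> by (metis rel_interior_interior rel_interior_eq_empty inf_bot_right)
  obtain \<mu> where "\<forall>x\<in>Q. (a + \<mu> *\<^sub>R a1) \<bullet> x \<le> b + \<mu> * b1"
    using pencil_supports_convex_hull[OF \<open>finite V\<close>, of a1 b1 a b] supp QV by auto
  hence "S \<noteq> {}"
    using pencil_angle_admissible[OF H1 H HneH1] face_ne unfolding S_def by blast
  moreover have "bdd_above S"
    unfolding S_def admissible_angles_def by (auto intro: bdd_aboveI hyperplane_angle_le_pi2)
  moreover have "xbar \<in> {x. a \<bullet> x \<ge> b} \<inter> {x. a1 \<bullet> x = b1}"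
    using xbar rel_interior_subset by blast
  hence "S \<subseteq> {\<phi>. infdist xbar (frontier {x. a \<bullet> x \<ge> b} \<inter> {x. a1 \<bullet> x = b1}) * sin \<phi> \<le> infdist xbar Q}"
    using admissible_angle_bound[OF _ \<open>convex Q\<close> \<open>interior Q \<noteq> {}\<close>] unfolding S_def by blast
  hence "S \<subseteq> {\<phi>. infdist xbar ({x. a \<bullet> x = b} \<inter> {x. a1 \<bullet> x = b1}) * sin \<phi> \<le> infdist xbar Q}"
      (is "S \<subseteq> ?C")
    using H by (simp add: frontier_halfspace_ge)
  moreover have "closed ?C" by (intro closed_Collect_le continuous_intros)
  ultimately have "Sup S \<in> ?C" by (metis closed_subset_contains_Sup)
  thus ?thesis unfolding theta_eq_Sup_admissible_angles S_def[symmetric] by simp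
qed

end
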